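(* For all integers $t,k>3$ satisfying $(2t)^k-1<t^k(2t-1)$, there exists a simple undirected graph $U$ with $t^k$ vertices, minimum degree at least $2$ and diameter $k$, such that every directed graph $G$ with $U(G)=U$ is an equilibrium graph in the MAX version of the bounded budget network creation game whose budgets are the outdegrees of the vertices of $G$.
   Context: Bounded budget network creation game $(b_1,\dots,b_n)$-BG: $n$ players with integer budgets $0\le b_i\le n-1$. A strategy of player $i$ is a set $S_i\subseteq\{1,\dots,n\}\setminus\{i\}$ with $|S_i|=b_i$; a profile is realized by the directed graph $G$ on $u_1,\dots,u_n$ with an arc $\overrightarrow{u_iu_j}$ iff $j\in S_i$. Thus a directed graph $G$ (without loops) in which vertex $u_i$ has outdegree $b_i$ is a realization of $(b_1,\dots,b_n)$-BG. $U(G)$ is the undirected multigraph obtained by ignoring arc directions. $\operatorname{dist}(u,v)$ is the distance in $U(G)$, defined as $n^2$ between different components. MAX cost: $c_{MAX}(u)=\max_v\operatorname{dist}(u,v)+(\kappa-1)n^2$, $\kappa$ the number of components of $U(G)$. An equilibrium graph in the MAX version is a realization in which no vertex can decrease its MAX cost by changing its own strategy while the other strategies are fixed. *)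

theory Defs
  imports Main
begin

text \<open>Vertices are 0..<n (vertex u_i is i). A directed graph is a set of arcs (pairs).
  An (undirected, simple) graph is a symmetric irreflexive set of pairs.\<close>

definition digraph_on :: "nat \<Rightarrow> (nat \<times> nat) set \<Rightarrow> bool" where
  "digraph_on n G \<longleftrightarrow> G \<subseteq> {0..<n} \<times> {0..<n} \<and> (\<forall>u. (u, u) \<notin> G)"

definition simple_graph_on :: "nat \<Rightarrow> (nat \<times> nat) set \<Rightarrow> bool" where
  "simple_graph_on n E \<longleftrightarrow> E \<subseteq> {0..<n} \<times> {0..<n} \<and> (\<forall>u. (u, u) \<notin> E) \<and> sym E"

text \<open>Adjacency of the underlying undirected multigraph U(G) (multiplicities are irrelevant
  for distances).\<close>
definition und :: "(nat \<times> nat) set \<Rightarrow> (nat \<times> nat) set" where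
  "und G = G \<union> G\<inverse>"

text \<open>U(G) equals the simple graph U: the underlying multigraph has exactly the edges of U,
  each with multiplicity one (no pair of opposite arcs).\<close>
definition underlying_is :: "(nat \<times> nat) set \<Rightarrow> (nat \<times> nat) set \<Rightarrow> bool" where
  "underlying_is G U \<longleftrightarrow> und G = U \<and> (\<forall>u v. (u, v) \<in> G \<longrightarrow> (v, u) \<notin> G)"

definition gdist :: "nat \<Rightarrow> (nat \<times> nat) set \<Rightarrow> nat \<Rightarrow> nat \<Rightarrow> nat" where
  "gdist n R u v = (if (u, v) \<in> R\<^sup>* then (LEAST d. (u, v) \<in> R ^^ d) else n ^ 2)"

definition num_components :: "nat \<Rightarrow> (nat \<times> nat) set \<Rightarrow> nat" where
  "num_components n R = card ({0..<n} // (R\<^sup>*))"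

definition min_degree_ge :: "nat \<Rightarrow> (nat \<times> nat) set \<Rightarrow> nat \<Rightarrow> bool" where
  "min_degree_ge n E d \<longleftrightarrow> (\<forall>u<n. card (E `` {u}) \<ge> d)"

definition diameter :: "nat \<Rightarrow> (nat \<times> nat) set \<Rightarrow> nat" where
  "diameter n E = Max {gdist n E u v | u v. u < n \<and> v < n}"

definition cost_max :: "nat \<Rightarrow> (nat \<times> nat) set \<Rightarrow> nat \<Rightarrow> nat" where
  "cost_max n G u = Max {gdist n (und G) u v | v. v < n}
      + (num_components n (und G) - 1) * n ^ 2"

text \<open>Vertex i replaces its strategy (out-neighbourhood) by S.\<close>
definition deviate :: "(nat \<times> nat) set \<Rightarrow> nat \<Rightarrow> nat set \<Rightarrow> (nat \<times> nat) set" where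
  "deviate G i S = {(a, b) \<in> G. a \<noteq> i} \<union> ({i} \<times> S)"

definition max_equilibrium :: "nat \<Rightarrow> (nat \<times> nat) set \<Rightarrow> bool" where
  "max_equilibrium n G \<longleftrightarrow> digraph_on n G \<and>
     (\<forall>i<n. \<forall>S. S \<subseteq> {0..<n} - {i} \<and> card S = card (G `` {i}) \<longrightarrow>
        cost_max n G i \<le> cost_max n (deviate G i S) i)"

end

theory Submission
  imports Defs
begin

text \<open>Take for U the undirected de Bruijn graph on the base-t words of length k: any two
  vertices are joined by a walk of length at most k (shift in the digits of the target one at
  a time), and every vertex has at most 2t neighbours. When vertex i deviates, its new
  neighbourhood is no larger than in U, and every other vertex can only gain i itself as a
  neighbour. Walks from i that do not return to i therefore branch at most 2t ways per step,
  so fewer than the sum of (2t)^d over d < k vertices are within distance k - 1 of i. The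
  hypothesis says this sum is below t^k, so after any deviation some vertex is at distance at
  least k from i, whereas before it every vertex was within distance k.\<close>

definition out_degree_le :: "('a \<times> 'a) set \<Rightarrow> nat \<Rightarrow> bool" where
  "out_degree_le R D \<longleftrightarrow> (\<forall>w. finite (R `` {w}) \<and> card (R `` {w}) \<le> D)"

lemma out_degree_le_subset:
  assumes "out_degree_le R D" and "R' \<subseteq> R"
  shows "out_degree_le R' D"
proof -
  have "R' `` {w} \<subseteq> R `` {w}" for w using assms(2) by auto
  then show ?thesis
    using assms(1) unfolding out_degree_le_def by (meson card_mono finite_subset order_trans)
qed

lemma out_degree_le_relpow:
  assumes "out_degree_le R D"
  shows "out_degree_le (R ^^ j) (D ^ j)"
  unfolding out_degree_le_def
proof (intro allI, induction j)
  case 0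
  then show ?case by simp
next
  case (Suc j w)
  let ?L = "(R ^^ j) `` {w}"
  have eq: "(R ^^ Suc j) `` {w} = (\<Union>x\<in>?L. R `` {x})"
    by (auto simp: relcomp_Image)
  have fin: "finite ?L" and card_L: "card ?L \<le> D ^ j" using Suc by auto
  have "card (\<Union>x\<in>?L. R `` {x}) \<le> (\<Sum>x\<in>?L. card (R `` {x}))"
    by (rule card_UN_le[OF fin])
  also have "\<dots> \<le> card ?L * D"
    using sum_mono[of ?L "\<lambda>x. card (R `` {x})" "\<lambda>_. D"] assms
    by (simp add: out_degree_le_def)
  also have "\<dots> \<le> D ^ Suc j" using card_L by (simp add: mult.commute)
  finally show ?case using eq fin assms by (simp add: out_degree_le_def)
qed

lemma card_ball_le:
  assumes "out_degree_le R D"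
  shows "finite (\<Union>d<m. (R ^^ d) `` {i}) \<and> card (\<Union>d<m. (R ^^ d) `` {i}) \<le> (\<Sum>d<m. D ^ d)"
proof -
  have layer: "finite ((R ^^ d) `` {i}) \<and> card ((R ^^ d) `` {i}) \<le> D ^ d" for d
    using out_degree_le_relpow[OF assms] unfolding out_degree_le_def by blast
  have "card (\<Union>d<m. (R ^^ d) `` {i}) \<le> (\<Sum>d<m. card ((R ^^ d) `` {i}))"
    by (rule card_UN_le) simp
  also have "\<dots> \<le> (\<Sum>d<m. D ^ d)" by (rule sum_mono) (use layer in blast)
  finally show ?thesis using layer by simp
qed

text \<open>Restart the walk at its last visit to i.\<close>

lemma relpow_avoiding_source:
  "(i, v) \<in> R ^^ d \<Longrightarrow> \<exists>d'\<le>d. (i, v) \<in> (R - UNIV \<times> {i}) ^^ d'"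
proof (induction d arbitrary: v)
  case 0
  then show ?case by auto
next
  case (Suc d)
  then obtain w where w: "(i, w) \<in> R ^^ d" "(w, v) \<in> R" by auto
  then obtain d' where d': "d' \<le> d" "(i, w) \<in> (R - UNIV \<times> {i}) ^^ d'" using Suc.IH by blast
  show ?case
  proof (cases "v = i")
    case True
    then show ?thesis by (intro exI[of _ 0]) auto
  next
    case False
    with w d' have "(i, v) \<in> (R - UNIV \<times> {i}) ^^ Suc d'" by (auto intro: relpow_Suc_I)
    with d' show ?thesis by (intro exI[of _ "Suc d'"]) auto
  qed
qed

lemma gdist_le_relpow:
  assumes "(u, v) \<in> R ^^ d"
  shows "gdist n R u v \<le> d"
proof -
  have "(u, v) \<in> R\<^sup>*" using assms relpow_imp_rtrancl by blast
  then show ?thesis using assms by (simp add: gdist_def Least_le)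
qed

lemma le_gdist_if_no_short_walk:
  assumes "\<And>d. d < k \<Longrightarrow> (u, v) \<notin> R ^^ d" and "k \<le> n ^ 2"
  shows "k \<le> gdist n R u v"
proof (cases "(u, v) \<in> R\<^sup>*")
  case True
  then obtain d where "(u, v) \<in> R ^^ d" using rtrancl_power by blast
  then have "(u, v) \<in> R ^^ (LEAST d. (u, v) \<in> R ^^ d)" by (rule LeastI)
  then have "\<not> (LEAST d. (u, v) \<in> R ^^ d) < k" using assms(1) by blast
  then show ?thesis using True by (simp add: gdist_def)
next
  case False
  then show ?thesis using assms(2) by (simp add: gdist_def)
qed

lemma exists_far_vertex:
  assumes deg: "out_degree_le (R - UNIV \<times> {i}) D"
    and small: "(\<Sum>d<k. D ^ d) < n" and "k \<le> n ^ 2"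
  shows "\<exists>v<n. k \<le> gdist n R i v"
proof -
  let ?B = "\<Union>d<k. ((R - UNIV \<times> {i}) ^^ d) `` {i}"
  obtain fin: "finite ?B" and "card ?B \<le> (\<Sum>d<k. D ^ d)"
    using card_ball_le[OF deg] by blast
  then have "card ?B < card {0..<n}" using small by simp
  then have "\<not> {0..<n} \<subseteq> ?B" using card_mono[OF fin] leD by blast
  then obtain v where "v \<in> {0..<n}" and far: "v \<notin> ?B" by blast
  then have "v < n" by simp
  have no_short_walk: "(i, v) \<notin> R ^^ d" if "d < k" for d
  proof
    assume "(i, v) \<in> R ^^ d"
    from relpow_avoiding_source[OF this]
    obtain d' where "d' \<le> d" "(i, v) \<in> (R - UNIV \<times> {i}) ^^ d'" by blast
    with \<open>d < k\<close> far show False by auto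
  qed
  have "k \<le> gdist n R i v" using no_short_walk assms(3) by (rule le_gdist_if_no_short_walk)
  with \<open>v < n\<close> show ?thesis by blast
qed

lemma relpow_Un_Id_imp_relpow_le:
  "(x, y) \<in> (R \<union> Id) ^^ m \<Longrightarrow> \<exists>d\<le>m. (x, y) \<in> R ^^ d"
proof (induction m arbitrary: y)
  case 0
  then show ?case by auto
next
  case (Suc m)
  then obtain z where z: "(x, z) \<in> (R \<union> Id) ^^ m" "(z, y) \<in> R \<union> Id" by auto
  from Suc.IH[OF z(1)] obtain d where d: "d \<le> m" "(x, z) \<in> R ^^ d" by blast
  show ?case
  proof (cases "(z, y) \<in> R")
    case True
    with d show ?thesis by (intro exI[of _ "Suc d"]) (auto intro: relpow_Suc_I)
  next
    case False
    with z(2) d show ?thesis by (intro exI[of _ d]) auto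
  qed
qed

lemma num_components_eq_1:
  assumes "0 < n" and "\<And>x y. x < n \<Longrightarrow> y < n \<Longrightarrow> (x, y) \<in> R\<^sup>*"
  shows "num_components n R = 1"
proof -
  have class_eq: "R\<^sup>* `` {x} = R\<^sup>* `` {0}" if "x < n" for x
  proof -
    have "(x, 0) \<in> R\<^sup>*" "(0, x) \<in> R\<^sup>*" using assms that by auto
    then show ?thesis by (auto intro: rtrancl_trans)
  qed
  have "{0..<n} // R\<^sup>* = (\<lambda>x. R\<^sup>* `` {x}) ` {0..<n}" unfolding quotient_def by blast
  also have "\<dots> = (\<lambda>x. R\<^sup>* `` {0}) ` {0..<n}" by (rule image_cong[OF refl], rule class_eq) simp
  also have "\<dots> = {R\<^sup>* `` {0}}" using assms(1) by (simp add: image_constant_conv)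
  finally show ?thesis unfolding num_components_def by simp
qed

lemma gdist_le_cost_max:
  "v < n \<Longrightarrow> gdist n (und G) u v \<le> cost_max n G u"
  unfolding cost_max_def by (rule trans_le_add1, rule Max_ge) auto

lemma cost_max_le_if_connected:
  assumes "0 < n" and "num_components n (und G) = 1"
    and "\<And>v. v < n \<Longrightarrow> gdist n (und G) u v \<le> k"
  shows "cost_max n G u \<le> k"
proof -
  have "{gdist n (und G) u v | v. v < n} = (\<lambda>v. gdist n (und G) u v) ` {..<n}" by auto
  moreover have "Max ((\<lambda>v. gdist n (und G) u v) ` {..<n}) \<le> k"
    using assms(1,3) by (subst Max_le_iff) auto
  ultimately show ?thesis using assms(2) unfolding cost_max_def by simp
qed

lemma out_degree_le_deviate:
  assumes G: "digraph_on n G" "underlying_is G U"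
    and S: "S \<subseteq> {0..<n} - {i}" "card S = card (G `` {i})"
    and degU: "out_degree_le U D"
  shows "out_degree_le (und (deviate G i S) - UNIV \<times> {i}) D"
  unfolding out_degree_le_def
proof
  fix w
  have U: "U = G \<union> G\<inverse>" using G(2) unfolding underlying_is_def und_def by simp
  have "G \<subseteq> {0..<n} \<times> {0..<n}" using G(1) unfolding digraph_on_def by blast
  then have "finite G" by (rule finite_subset) simp
  have fin: "finite S" "finite (G\<inverse> `` {i})" "finite (G `` {i})"
    using finite_subset[OF S(1)] \<open>finite G\<close> by (simp_all add: finite_Image)
  let ?N = "(und (deviate G i S) - UNIV \<times> {i}) `` {w}"
  show "finite ?N \<and> card ?N \<le> D"
  proof (cases "w = i")
    case True
    have sub: "?N \<subseteq> S \<union> G\<inverse> `` {i}" using True unfolding und_def deviate_def by auto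
    have disj: "G `` {i} \<inter> G\<inverse> `` {i} = {}" using G(2) unfolding underlying_is_def by auto
    have "card (S \<union> G\<inverse> `` {i}) \<le> card (G `` {i}) + card (G\<inverse> `` {i})"
      using card_Un_le[of S "G\<inverse> `` {i}"] S(2) by linarith
    also have "\<dots> = card (U `` {i})"
      using card_Un_disjoint[OF fin(3,2) disj] U by (simp add: Un_Image)
    also have "\<dots> \<le> D" using degU unfolding out_degree_le_def by blast
    finally have "card (S \<union> G\<inverse> `` {i}) \<le> D" .
    moreover have "finite (S \<union> G\<inverse> `` {i})" using fin by simp
    ultimately show ?thesis using finite_subset[OF sub] card_mono[OF _ sub] by fastforce
  next
    case False
    then have sub: "?N \<subseteq> U `` {w}" using U unfolding und_def deviate_def by auto
    have "finite (U `` {w})" "card (U `` {w}) \<le> D" using degU unfolding out_degree_le_def by blast+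
    then show ?thesis using finite_subset[OF sub] card_mono[OF _ sub] by fastforce
  qed
qed

text \<open>Vertices are the numbers below t^k, i.e. base-t words of length k; u and v are
  adjacent when one arises from the other by dropping its leading digit and appending a
  digit (the left shift (u t + a) mod t^k).\<close>

definition debruijn :: "nat \<Rightarrow> nat \<Rightarrow> (nat \<times> nat) set" where
  "debruijn t k = {(u, v). u < t ^ k \<and> v < t ^ k \<and> u \<noteq> v \<and>
     (\<exists>a<t. v = (u * t + a) mod t ^ k \<or> u = (v * t + a) mod t ^ k)}"

lemma simple_graph_debruijn: "simple_graph_on (t ^ k) (debruijn t k)"
  unfolding simple_graph_on_def debruijn_def sym_def by auto

lemma power_eq_mult_power_pred: "1 \<le> k \<Longrightarrow> t ^ k = t * t ^ (k - 1)"
  by (metis Suc_diff_le diff_Suc_1 power_Suc)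

lemma shift_mod_power:
  fixes v a t k :: nat
  assumes "a < t" and "1 \<le> k"
  shows "(v * t + a) mod t ^ k = t * (v mod t ^ (k - 1)) + a"
proof -
  have "(v * t + a) mod (t * t ^ (k - 1)) = t * ((v * t + a) div t mod t ^ (k - 1)) + (v * t + a) mod t"
    by (rule mod_mult2_eq)
  then show ?thesis unfolding power_eq_mult_power_pred[OF assms(2)] using assms(1) by simp
qed

lemma shift_preimage:
  fixes v a t k :: nat
  assumes "a < t" and "1 \<le> k" and "v < t ^ k" and "(v * t + a) mod t ^ k = w"
  shows "v \<in> (\<lambda>b. w div t + b * t ^ (k - 1)) ` {..<t}"
proof -
  have "w = a + v mod t ^ (k - 1) * t"
    using shift_mod_power[OF assms(1,2), of v] assms(4) by simp
  then have "w div t = v mod t ^ (k - 1)" using assms(1) by simp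
  moreover have "v div t ^ (k - 1) < t"
    using assms(3) unfolding power_eq_mult_power_pred[OF assms(2)] by (rule less_mult_imp_div_less)
  ultimately have "v = w div t + v div t ^ (k - 1) * t ^ (k - 1)" "v div t ^ (k - 1) \<in> {..<t}"
    using mod_div_mult_eq[of v "t ^ (k - 1)"] by simp_all
  then show ?thesis by (rule image_eqI)
qed

text \<open>The at most t successors of w are its left shifts; its at most t predecessors are
  determined by w div t and their leading digit.\<close>

lemma out_degree_le_debruijn:
  assumes "1 \<le> k"
  shows "out_degree_le (debruijn t k) (2 * t)"
  unfolding out_degree_le_def
proof
  fix w
  let ?A = "(\<lambda>a. (w * t + a) mod t ^ k) ` {..<t}"
  let ?B = "(\<lambda>b. w div t + b * t ^ (k - 1)) ` {..<t}"
  have sub: "debruijn t k `` {w} \<subseteq> ?A \<union> ?B"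
  proof
    fix v
    assume "v \<in> debruijn t k `` {w}"
    then obtain a where a: "a < t" "v < t ^ k" and "v = (w * t + a) mod t ^ k \<or> w = (v * t + a) mod t ^ k"
      unfolding debruijn_def by auto
    then consider "v = (w * t + a) mod t ^ k" | "(v * t + a) mod t ^ k = w" by auto
    then show "v \<in> ?A \<union> ?B"
    proof cases
      case 1
      then show ?thesis using a(1) by blast
    next
      case 2
      then show ?thesis using shift_preimage[OF a(1) assms a(2)] by blast
    qed
  qed
  have "card ?A \<le> t" "card ?B \<le> t" by (metis card_image_le card_lessThan finite_lessThan)+
  then have "card (?A \<union> ?B) \<le> 2 * t" using card_Un_le[of ?A ?B] by linarith
  moreover have fin: "finite (?A \<union> ?B)" by simp
  ultimately show "finite (debruijn t k `` {w}) \<and> card (debruijn t k `` {w}) \<le> 2 * t"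
    using card_mono[OF fin sub] finite_subset[OF sub fin] by (intro conjI) linarith+
qed

lemma debruijn_degree_ge_2:
  assumes "3 \<le> t" and "1 \<le> k" and "u < t ^ k"
  shows "2 \<le> card (debruijn t k `` {u})"
proof -
  define c where "c = t * (u mod t ^ (k - 1))"
  have succ: "c + a \<in> debruijn t k `` {u}" if "a < t" and "c + a \<noteq> u" for a
  proof -
    have "(u * t + a) mod t ^ k = c + a"
      using shift_mod_power[OF that(1) assms(2)] c_def by simp
    moreover have "(u * t + a) mod t ^ k < t ^ k" using assms(3) by (intro mod_less_divisor) linarith
    ultimately have "(u, c + a) \<in> debruijn t k"
      using that assms(3) unfolding debruijn_def by (simp only: mem_Collect_eq case_prod_conv) metis
    then show ?thesis by blast
  qed
  have sub: "{c, c + 1, c + 2} - {u} \<subseteq> debruijn t k `` {u}"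
    using succ[of 0] succ[of 1] succ[of 2] assms(1) by auto
  have fin: "finite (debruijn t k `` {u})"
    using out_degree_le_debruijn[OF assms(2)] unfolding out_degree_le_def by blast
  have "card {c, c + 1, c + 2} = 3" by simp
  then have "2 \<le> card ({c, c + 1, c + 2} - {u})"
    using card_Diff_singleton_if[of "{c, c + 1, c + 2}" u] by (simp only: split: if_splits) linarith+
  then show ?thesis using card_mono[OF fin sub] by linarith
qed

lemma shift_in_digits_mod:
  fixes u y t j N :: nat
  shows "(u * t ^ Suc j + y) mod N = (((u * t ^ j + y div t) mod N) * t + y mod t) mod N"
proof -
  have "(((u * t ^ j + y div t) mod N) * t + y mod t) mod N = ((u * t ^ j + y div t) * t + y mod t) mod N"
    by (metis mod_add_left_eq mod_mult_left_eq)
  also have "(u * t ^ j + y div t) * t + y mod t = u * t ^ Suc j + y"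
    by (simp add: algebra_simps)
  finally show ?thesis by simp
qed

text \<open>The j-th vertex of the walk consists of the last k - j digits of u followed by the
  first j digits of v.\<close>

lemma debruijn_walk:
  assumes "2 \<le> t" and "1 \<le> k" and "u < t ^ k" and "v < t ^ k"
  shows "\<exists>d\<le>k. (u, v) \<in> debruijn t k ^^ d"
proof -
  define w where "w j = (u * t ^ j + v div t ^ (k - j)) mod t ^ k" for j
  have step: "(w j, w (Suc j)) \<in> debruijn t k \<union> Id" if "j < k" for j
  proof -
    define y where "y = v div t ^ (k - Suc j)"
    have "t ^ (k - j) = t ^ (k - Suc j) * t" using that
      by (metis Suc_diff_Suc mult.commute power_Suc)
    then have "v div t ^ (k - j) = y div t" unfolding y_def by (simp add: div_mult2_eq)
    then have "w (Suc j) = (w j * t + y mod t) mod t ^ k"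
      unfolding w_def y_def using shift_in_digits_mod by simp
    moreover have "y mod t < t" "w j < t ^ k" "w (Suc j) < t ^ k" using assms(1) by (simp_all add: w_def)
    ultimately show ?thesis unfolding debruijn_def by blast
  qed
  have walk: "(u, w j) \<in> (debruijn t k \<union> Id) ^^ j" if "j \<le> k" for j
    using that
  proof (induction j)
    case 0
    then show ?case using assms(3,4) by (simp add: w_def)
  next
    case (Suc j)
    then show ?case using step[of j] by (auto intro: relpow_Suc_I)
  qed
  have "w k = v" using assms(4) by (simp add: w_def)
  then show ?thesis using walk[of k] relpow_Un_Id_imp_relpow_le by auto
qed

lemma gdist_debruijn_le:
  assumes "2 \<le> t" and "1 \<le> k" and "u < t ^ k" and "v < t ^ k"
  shows "gdist n (debruijn t k) u v \<le> k"
proof -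
  obtain d where "d \<le> k" and "(u, v) \<in> debruijn t k ^^ d" using debruijn_walk[OF assms] by blast
  moreover from this(2) have "gdist n (debruijn t k) u v \<le> d" by (rule gdist_le_relpow)
  ultimately show ?thesis by linarith
qed

lemma num_components_debruijn:
  assumes "2 \<le> t" and "1 \<le> k"
  shows "num_components (t ^ k) (debruijn t k) = 1"
proof (rule num_components_eq_1)
  show "0 < t ^ k" using assms(1) by simp
  fix x y
  assume "x < t ^ k" and "y < t ^ k"
  then obtain d where "(x, y) \<in> debruijn t k ^^ d" using debruijn_walk[OF assms] by blast
  then show "(x, y) \<in> (debruijn t k)\<^sup>*" by (rule relpow_imp_rtrancl)
qed

lemma diameter_debruijn:
  assumes "2 \<le> t" and "1 \<le> k"
    and small: "(\<Sum>d<k. (2 * t) ^ d) < t ^ k" and "k \<le> (t ^ k)\<^sup>2"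
  shows "diameter (t ^ k) (debruijn t k) = k"
proof -
  let ?n = "t ^ k"
  have "0 < ?n" using assms(1) by simp
  have "out_degree_le (debruijn t k - UNIV \<times> {0}) (2 * t)"
    using out_degree_le_debruijn[OF assms(2)] by (rule out_degree_le_subset) blast
  from exists_far_vertex[OF this small assms(4)]
  obtain v where v: "v < ?n" "k \<le> gdist ?n (debruijn t k) 0 v" by blast
  then have far: "gdist ?n (debruijn t k) 0 v = k"
    using gdist_debruijn_le[where n = ?n, OF assms(1,2) \<open>0 < ?n\<close> v(1)] by linarith
  let ?M = "{gdist ?n (debruijn t k) u v | u v. u < ?n \<and> v < ?n}"
  have bounded: "x \<le> k" if "x \<in> ?M" for x
    using that gdist_debruijn_le[where n = ?n, OF assms(1,2)] by blast
  then have "?M \<subseteq> {..k}" by blast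
  then have "finite ?M" by (rule finite_subset) simp
  moreover have "k \<in> ?M"
    using far v(1) \<open>0 < ?n\<close> by (intro CollectI exI[of _ 0] exI[of _ v]) simp
  ultimately show ?thesis unfolding diameter_def using Max_eqI bounded by blast
qed

lemma max_equilibrium_debruijn:
  assumes "2 \<le> t" and "1 \<le> k"
    and small: "(\<Sum>d<k. (2 * t) ^ d) < t ^ k" and "k \<le> (t ^ k)\<^sup>2"
    and G: "digraph_on (t ^ k) G" "underlying_is G (debruijn t k)"
  shows "max_equilibrium (t ^ k) G"
  unfolding max_equilibrium_def
proof (intro conjI allI impI)
  fix i S
  assume i: "i < t ^ k" and S: "S \<subseteq> {0..<t ^ k} - {i} \<and> card S = card (G `` {i})"
  have U: "und G = debruijn t k" using G(2) unfolding underlying_is_def by simp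
  have "cost_max (t ^ k) G i \<le> k"
  proof (rule cost_max_le_if_connected)
    show "0 < t ^ k" using assms(1) by simp
    show "num_components (t ^ k) (und G) = 1"
      unfolding U by (rule num_components_debruijn[OF assms(1,2)])
    fix v
    assume "v < t ^ k"
    then show "gdist (t ^ k) (und G) i v \<le> k"
      unfolding U by (rule gdist_debruijn_le[OF assms(1,2) i])
  qed
  moreover have "out_degree_le (und (deviate G i S) - UNIV \<times> {i}) (2 * t)"
    using S out_degree_le_deviate[OF G _ _ out_degree_le_debruijn[OF assms(2)]] by blast
  from exists_far_vertex[OF this small assms(4)]
  obtain v where "v < t ^ k" and "k \<le> gdist (t ^ k) (und (deviate G i S)) i v" by blast
  moreover from \<open>v < t ^ k\<close>
  have "gdist (t ^ k) (und (deviate G i S)) i v \<le> cost_max (t ^ k) (deviate G i S) i"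
    by (rule gdist_le_cost_max)
  ultimately show "cost_max (t ^ k) G i \<le> cost_max (t ^ k) (deviate G i S) i" by linarith
qed (rule G(1))

lemma sum_powers_less_power:
  fixes t k :: nat
  assumes "0 < t" and "(2 * int t) ^ k - 1 < int t ^ k * (2 * int t - 1)"
  shows "(\<Sum>d<k. (2 * t) ^ d) < t ^ k"
proof -
  have "(2 * int t - 1) * (\<Sum>d<k. (2 * int t) ^ d) < (2 * int t - 1) * int t ^ k"
    using power_diff_1_eq[of "2 * int t" k] assms(2) by (simp add: mult.commute)
  then have "(\<Sum>d<k. (2 * int t) ^ d) < int t ^ k"
    using assms(1) by (simp add: mult_less_cancel_left)
  moreover have "int (\<Sum>d<k. (2 * t) ^ d) = (\<Sum>d<k. (2 * int t) ^ d)" by simp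
  ultimately show ?thesis by (metis of_nat_less_iff of_nat_power)
qed

theorem mainTheorem15:
  fixes t k :: nat
  assumes "t > 3" and "k > 3"
    and "(2 * int t) ^ k - 1 < int t ^ k * (2 * int t - 1)"
  shows "\<exists>U. simple_graph_on (t ^ k) U \<and> min_degree_ge (t ^ k) U 2
           \<and> diameter (t ^ k) U = k
           \<and> (\<forall>G. digraph_on (t ^ k) G \<and> underlying_is G U \<longrightarrow> max_equilibrium (t ^ k) G)"
proof -
  have t: "3 \<le> t" "2 \<le> t" and k: "1 \<le> k" using assms(1,2) by auto
  have small: "(\<Sum>d<k. (2 * t) ^ d) < t ^ k" using sum_powers_less_power assms(1,3) by simp
  have "k < 2 ^ k" by (rule less_exp)
  also have "\<dots> \<le> t ^ k" using t by (simp add: power_mono)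
  also have "\<dots> \<le> (t ^ k)\<^sup>2" by (simp add: power2_eq_square)
  finally have large: "k \<le> (t ^ k)\<^sup>2" by simp
  show ?thesis
  proof (intro exI[of _ "debruijn t k"] conjI allI impI)
    show "simple_graph_on (t ^ k) (debruijn t k)" by (rule simple_graph_debruijn)
    show "min_degree_ge (t ^ k) (debruijn t k) 2"
      unfolding min_degree_ge_def using debruijn_degree_ge_2[OF t(1) k] by blast
    show "diameter (t ^ k) (debruijn t k) = k" by (rule diameter_debruijn[OF t(2) k small large])
    fix G
    assume "digraph_on (t ^ k) G \<and> underlying_is G (debruijn t k)"
    then show "max_equilibrium (t ^ k) G"
      using max_equilibrium_debruijn[OF t(2) k small large] by blast
  qed
qed

end
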